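(* Let $\Omega>0$ denote the maximum absolute value of the stored quantities, let $C$ be the column index of a Boolean scalar (stored as $X[1,C]\in\{0,1\}$) in $X\in\mathbb{R}^{K\times d}$, and let $D,E$ be column indices of two columns all of whose entries are Boolean. Then there exists a single transformer layer that simulates the repeat-AND operation $X[i,D]\leftarrow X[1,C]\wedge X[i,D]\wedge\neg X[i,E]$ for all $i\in\{2,3,\dots,K\}$.
   Context: Conventions: rows/columns indexed from $1$; $X[i,j]$ is the $(i,j)$ entry. $\wedge,\neg$ are logical AND and NOT on $\{0,1\}$. $\phi(x)=\max\{x,0\}$ entrywise. Hardmax $\sigma$: row $i$ of $\sigma(\Phi)$ is $\frac{1}{|S_i|}\sum_{k\in S_i}e_k$, $S_i=\{k:\Phi_{ik}=\max_j\Phi_{ij}\}$. For a weighted hypergraph with incident matrix $A\in\mathbb{R}^{n_v\times n_e}$ ($A_{ij}=w(e_j)$ if vertex $v_i\in e_j$, else $0$) and $K\ge\max\{n_v,n_e\}+1$, the padded incident matrix $\widetilde A\in\mathbb{R}^{K\times K}$ has $\widetilde A_{i+1,j+1}=A_{ij}$, zeros elsewhere. A transformer layer on $X\in\mathbb{R}^{K\times d}$ is $f(X,\widetilde A)=f_{\mathrm{mlp}}(f_{\mathrm{attn}}(X,\widetilde A))$, $f_{\mathrm{attn}}(X,\widetilde A)=\sum_{i\in M_A}\psi^{(i)}(X,\widetilde A)+\sum_{i\in M_{A^\top}}\psi^{(i)}(X,\widetilde A^\top)+\sum_{i\in M}\psi^{(i)}(X,I_K)+X$, $\psi(X,B)=B\,\sigma(XW_QW_K^\top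 X^\top)XW_V$ ($W_Q,W_K\in\mathbb{R}^{d\times2}$, $W_V\in\mathbb{R}^{d\times d}$), $f_{\mathrm{mlp}}(X)=Z^{(4)}W^{(4)}+X$, $Z^{(1)}=X$, $Z^{(j+1)}=\phi(Z^{(j)}W^{(j)})$ ($j=1,2,3$). Storage convention: scalars in the top row of a column (rest $0$), arrays of length $K-1$ in rows $2,\dots,K$ (top $0$); designated columns $B_{\mathrm{global}}$ (top $1$, rest $0$), $B_{\mathrm{local}}$ (top $0$, rest $1$), and scratchpad columns. "Simulating an operation" means the layer's weights can be chosen so that applying it to $X$ performs the stated update. *)

theory Defs
  imports "Jordan_Normal_Form.Matrix"
begin

text \<open>Matrices are Jordan_Normal_Form matrices, indexed from 0.
  Paper row/column index r corresponds to index r-1 here.\<close>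

definition relu_mat :: "real mat \<Rightarrow> real mat" where
  "relu_mat M = map_mat (\<lambda>x. max x 0) M"

definition hardmax :: "real mat \<Rightarrow> real mat" where
  "hardmax P = mat (dim_row P) (dim_col P)
     (\<lambda>(i,j). let S = {k. k < dim_col P \<and> P $$ (i,k) = Max {P $$ (i,l) | l. l < dim_col P}}
             in if j \<in> S then 1 / real (card S) else 0)"

type_synonym head = "real mat \<times> real mat \<times> real mat"

definition psi :: "real mat \<Rightarrow> real mat \<Rightarrow> head \<Rightarrow> real mat" where
  "psi X B h = (case h of (WQ, WK, WV) \<Rightarrow>
      B * hardmax (X * WQ * transpose_mat WK * transpose_mat X) * X * WV)"

record tlayer =
  headsA  :: "head list"
  headsAT :: "head list"
  headsI  :: "head list"
  W1 :: "real mat"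
  W2 :: "real mat"
  W3 :: "real mat"
  W4 :: "real mat"

definition wf_head :: "nat \<Rightarrow> head \<Rightarrow> bool" where
  "wf_head d h = (case h of (WQ, WK, WV) \<Rightarrow>
      WQ \<in> carrier_mat d 2 \<and> WK \<in> carrier_mat d 2 \<and> WV \<in> carrier_mat d d)"

definition wf_layer :: "nat \<Rightarrow> tlayer \<Rightarrow> bool" where
  "wf_layer d T = ((\<forall>h \<in> set (headsA T) \<union> set (headsAT T) \<union> set (headsI T). wf_head d h) \<and>
     (\<exists>m1 m2 m3. W1 T \<in> carrier_mat d m1 \<and> W2 T \<in> carrier_mat m1 m2 \<and>
                 W3 T \<in> carrier_mat m2 m3 \<and> W4 T \<in> carrier_mat m3 d))"

definition f_attn :: "tlayer \<Rightarrow> real mat \<Rightarrow> real mat \<Rightarrow> real mat" where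
  "f_attn T X At =
     foldr (\<lambda>h acc. psi X At h + acc) (headsA T)
       (foldr (\<lambda>h acc. psi X (transpose_mat At) h + acc) (headsAT T)
         (foldr (\<lambda>h acc. psi X (1\<^sub>m (dim_row X)) h + acc) (headsI T) X))"

definition f_mlp :: "tlayer \<Rightarrow> real mat \<Rightarrow> real mat" where
  "f_mlp T X = relu_mat (relu_mat (relu_mat (X * W1 T) * W2 T) * W3 T) * W4 T + X"

definition layer_apply :: "tlayer \<Rightarrow> real mat \<Rightarrow> real mat \<Rightarrow> real mat" where
  "layer_apply T X At = f_mlp T (f_attn T X At)"

text \<open>Padded incidence matrix (K x K) of a weighted hypergraph with nv vertices and ne edges,
  vertex membership given by mem, edge weights w.\<close>
definition is_padded_incidence :: "nat \<Rightarrow> real mat \<Rightarrow> bool" where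
  "is_padded_incidence K At =
     (\<exists>nv ne (mem :: nat \<Rightarrow> nat \<Rightarrow> bool) (w :: nat \<Rightarrow> real).
        K \<ge> max nv ne + 1 \<and> At \<in> carrier_mat K K \<and>
        (\<forall>i<K. \<forall>j<K. At $$ (i,j) =
            (if 1 \<le> i \<and> i \<le> nv \<and> 1 \<le> j \<and> j \<le> ne \<and> mem (i-1) (j-1) then w (j-1) else 0)))"

definition band :: "real \<Rightarrow> real \<Rightarrow> real" where
  "band x y = (if x = 1 \<and> y = 1 then 1 else 0)"

definition bnot :: "real \<Rightarrow> real" where
  "bnot x = (if x = 1 then 0 else 1)"

end

theory Submission
  imports Defs
begin

text \<open>With zero query and key weights the hardmax is the uniform average over all \<open>K\<close> rows, so a
  single head whose value matrix is \<open>K\<close> times the matrix unit at \<open>(C, C)\<close> adds the sum of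
  column \<open>C\<close>, which by the storage convention is the scalar \<open>c = X[1,C]\<close>, to every entry of
  column \<open>C\<close>. On the rows \<open>i \<ge> 2\<close> (where \<open>G = 0\<close>,
  \<open>L = 1\<close>) the neuron \<open>C + D - E - 3G - L\<close> equals \<open>max (c + X[i,D] - X[i,E] - 1) 0\<close>, which is
  the Boolean \<open>c \<and> X[i,D] \<and> \<not> X[i,E]\<close>; on the top row (where \<open>G = 1\<close>) it vanishes. The neuron
  \<open>D - G\<close> reproduces the old column \<open>D\<close> below the top row and vanishes on it, so subtracting it
  overwrites \<open>D\<close>; the neuron \<open>C - G\<close> equals \<open>c\<close> on every row and undoes the broadcast.
  If \<open>C = D\<close>, column \<open>D\<close> is already zero below the top row and the identity layer does the job.\<close>

lemma index_mult_mat_sum: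
  fixes A B :: "'a::comm_semiring_0 mat"
  assumes "A \<in> carrier_mat n m" "B \<in> carrier_mat m p" "i < n" "j < p"
  shows "(A * B) $$ (i,j) = (\<Sum>k<m. A $$ (i,k) * B $$ (k,j))"
  using assms by (auto simp: scalar_prod_def lessThan_atLeast0 intro!: sum.cong)

lemma dim_relu_mat [simp]:
  "dim_row (relu_mat M) = dim_row M" "dim_col (relu_mat M) = dim_col M"
  by (auto simp: relu_mat_def)

lemma index_relu_mat [simp]:
  "i < dim_row M \<Longrightarrow> j < dim_col M \<Longrightarrow> relu_mat M $$ (i,j) = max (M $$ (i,j)) 0"
  by (auto simp: relu_mat_def)

lemma relu_mat_idem: "relu_mat (relu_mat M) = relu_mat M"
  by (intro eq_matI) (auto simp: relu_mat_def)

lemma f_mlp_identity_hidden: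
  assumes "W2 T = 1\<^sub>m m" "W3 T = 1\<^sub>m m" "dim_col (W1 T) = m"
  shows "f_mlp T Y = relu_mat (Y * W1 T) * W4 T + Y"
  using assms by (simp add: f_mlp_def relu_mat_idem)

lemma index_relu_mult_mat_of_cols_rows:
  fixes Y :: "real mat"
  assumes Y: "Y \<in> carrier_mat K d" and vs: "set vs \<subseteq> carrier_vec d"
    and ws: "set ws \<subseteq> carrier_vec d'" "length ws = length vs"
    and i: "i < K" and j: "j < d'"
  shows "(relu_mat (Y * mat_of_cols d vs) * mat_of_rows d' ws) $$ (i,j)
           = (\<Sum>q<length vs. max (row Y i \<bullet> vs ! q) 0 * ws ! q $ j)"
proof -
  have R: "relu_mat (Y * mat_of_cols d vs) \<in> carrier_mat K (length vs)"
    using Y by (intro carrier_matI) auto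
  have "(relu_mat (Y * mat_of_cols d vs) * mat_of_rows d' ws) $$ (i,j)
      = (\<Sum>q<length vs. relu_mat (Y * mat_of_cols d vs) $$ (i,q) * mat_of_rows d' ws $$ (q,j))"
    using ws(2) by (intro index_mult_mat_sum[OF R _ i j]) (simp add: carrier_matI)
  also have "\<dots> = (\<Sum>q<length vs. max (row Y i \<bullet> vs ! q) 0 * ws ! q $ j)"
  proof (intro sum.cong refl)
    fix q assume q: "q \<in> {..<length vs}"
    have "vs ! q \<in> carrier_vec d" using vs q by auto
    then show "relu_mat (Y * mat_of_cols d vs) $$ (i,q) * mat_of_rows d' ws $$ (q,j)
        = max (row Y i \<bullet> vs ! q) 0 * ws ! q $ j"
      using Y i j q ws(2) by (simp add: mat_of_rows_index)
  qed
  finally show ?thesis .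
qed

lemma hardmax_zero_mat: "hardmax (0\<^sub>m n m) = mat n m (\<lambda>_. 1 / real m)"
proof (intro eq_matI)
  fix i j assume "i < dim_row (mat n m (\<lambda>_. 1 / real m))" "j < dim_col (mat n m (\<lambda>_. 1 / real m))"
  then have i: "i < n" and j: "j < m" by auto
  then have "{(0\<^sub>m n m :: real mat) $$ (i,l) | l. l < m} = {0}" by (auto intro: exI[of _ j])
  then have max: "Max {(0\<^sub>m n m :: real mat) $$ (i,l) | l. l < m} = 0" by simp
  have argmax: "{k. k < m \<and> (0\<^sub>m n m :: real mat) $$ (i,k) = 0} = {..<m}" using i by auto
  show "hardmax (0\<^sub>m n m) $$ (i,j) = mat n m (\<lambda>_. 1 / real m) $$ (i,j)"
    using i j by (simp add: hardmax_def Let_def max argmax)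
qed (simp_all add: hardmax_def)

lemma psi_zero_query_key:
  assumes "X \<in> carrier_mat K d"
  shows "psi X (1\<^sub>m K) (0\<^sub>m d e, 0\<^sub>m d e, WV) = mat K K (\<lambda>_. 1 / real K) * X * WV"
proof -
  have "X * 0\<^sub>m d e * transpose_mat (0\<^sub>m d e) * transpose_mat X = 0\<^sub>m K K"
    using assms by simp
  then show ?thesis
    using assms by (simp add: psi_def hardmax_zero_mat)
qed

lemma averaging_mult_mat_unit:
  fixes X :: "real mat"
  assumes X: "X \<in> carrier_mat K d" and a: "a < d"
  shows "mat K K (\<lambda>_. 1 / real K) * X * mat d d (\<lambda>(r,s). if r = a \<and> s = b then real K else 0)
           = mat K d (\<lambda>(i,j). if j = b then (\<Sum>k<K. X $$ (k,a)) else 0)"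
proof (intro eq_matI)
  fix i j assume "i < dim_row (mat K d (\<lambda>(i,j). if j = b then (\<Sum>k<K. X $$ (k,a)) else 0))"
    "j < dim_col (mat K d (\<lambda>(i,j). if j = b then (\<Sum>k<K. X $$ (k,a)) else 0))"
  then have i: "i < K" and j: "j < d" by auto
  define A where "A = mat K K (\<lambda>_. 1 / real K) * X"
  have A: "A \<in> carrier_mat K d" unfolding A_def by (rule mult_carrier_mat[OF _ X]) simp
  have "(A * mat d d (\<lambda>(r,s). if r = a \<and> s = b then real K else 0)) $$ (i,j)
      = (\<Sum>r<d. A $$ (i,r) * (if r = a then (if j = b then real K else 0) else 0))"
    using A i j by (subst index_mult_mat_sum[OF A _ i j]) (auto intro: sum.cong)
  also have "\<dots> = (if j = b then real K * A $$ (i,a) else 0)"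
    using a by (simp add: if_distrib[of "\<lambda>x. _ * x"] cong: if_cong)
  also have "A $$ (i,a) = (\<Sum>k<K. X $$ (k,a)) / real K"
    using index_mult_mat_sum[of "mat K K (\<lambda>_. 1 / real K)" K K X d i a] X i a
    by (simp add: A_def sum_divide_distrib)
  finally show "(A * mat d d (\<lambda>(r,s). if r = a \<and> s = b then real K else 0)) $$ (i,j)
      = mat K d (\<lambda>(i,j). if j = b then (\<Sum>k<K. X $$ (k,a)) else 0) $$ (i,j)"
    using i j by simp
qed (use X in auto)

definition broadcast_head :: "nat \<Rightarrow> nat \<Rightarrow> nat \<Rightarrow> head" where
  "broadcast_head K d C =
     (0\<^sub>m d 2, 0\<^sub>m d 2, mat d d (\<lambda>(r,s). if r = C \<and> s = C then real K else 0))"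

text \<open>If \<open>E = C\<close>, column \<open>E\<close> of the attention output also carries the broadcast scalar, while
  \<open>X[i,E] = 0\<close> below the top row anyway; so \<open>E\<close> is then left out of the first neuron.\<close>
definition repeat_and_hidden :: "nat \<Rightarrow> nat \<Rightarrow> nat \<Rightarrow> nat \<Rightarrow> nat \<Rightarrow> nat \<Rightarrow> real vec list" where
  "repeat_and_hidden d C D E G L =
     [unit_vec d C + unit_vec d D - (if E = C then 0\<^sub>v d else unit_vec d E)
        - 3 \<cdot>\<^sub>v unit_vec d G - unit_vec d L,
      unit_vec d D - unit_vec d G,
      unit_vec d C - unit_vec d G]"

definition repeat_and_output :: "nat \<Rightarrow> nat \<Rightarrow> nat \<Rightarrow> real vec list" where
  "repeat_and_output d C D = [unit_vec d D, - unit_vec d D, - unit_vec d C]"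

definition repeat_and_layer :: "nat \<Rightarrow> nat \<Rightarrow> nat \<Rightarrow> nat \<Rightarrow> nat \<Rightarrow> nat \<Rightarrow> nat \<Rightarrow> tlayer" where
  "repeat_and_layer K d C D E G L =
     \<lparr>headsA = [], headsAT = [], headsI = [broadcast_head K d C],
      W1 = mat_of_cols d (repeat_and_hidden d C D E G L), W2 = 1\<^sub>m 3, W3 = 1\<^sub>m 3,
      W4 = mat_of_rows d (repeat_and_output d C D)\<rparr>"

lemma wf_layer_repeat_and_layer: "wf_layer d (repeat_and_layer K d C D E G L)"
  by (auto simp: wf_layer_def wf_head_def repeat_and_layer_def broadcast_head_def
      repeat_and_hidden_def repeat_and_output_def intro!: exI[of _ 3])

lemma f_attn_repeat_and_layer:
  assumes "X \<in> carrier_mat K d" "C < d"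
  shows "f_attn (repeat_and_layer K d C D E G L) X At
           = mat K d (\<lambda>(i,j). if j = C then (\<Sum>k<K. X $$ (k,C)) else 0) + X"
  using assms by (simp add: f_attn_def repeat_and_layer_def broadcast_head_def
      psi_zero_query_key averaging_mult_mat_unit)

lemma index_f_mlp_repeat_and_layer:
  fixes Y :: "real mat"
  assumes Y: "Y \<in> carrier_mat K d" and "C < d" "D < d" "E < d" "G < d" "L < d"
    and i: "i < K" and j: "j < d"
  shows "f_mlp (repeat_and_layer K d C D E G L) Y $$ (i,j) = Y $$ (i,j)
    + (if j = D then max (Y $$ (i,C) + Y $$ (i,D) - (if E = C then 0 else Y $$ (i,E))
                           - 3 * Y $$ (i,G) - Y $$ (i,L)) 0
                   - max (Y $$ (i,D) - Y $$ (i,G)) 0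
       else 0)
    - (if j = C then max (Y $$ (i,C) - Y $$ (i,G)) 0 else 0)"
proof -
  let ?vs = "repeat_and_hidden d C D E G L" and ?ws = "repeat_and_output d C D"
  have vs: "set ?vs \<subseteq> carrier_vec d" and ws: "set ?ws \<subseteq> carrier_vec d" "length ?ws = length ?vs"
    by (auto simp: repeat_and_hidden_def repeat_and_output_def)
  have mlp: "f_mlp (repeat_and_layer K d C D E G L) Y
      = relu_mat (Y * mat_of_cols d ?vs) * mat_of_rows d ?ws + Y"
    by (subst f_mlp_identity_hidden[where m = 3])
      (simp_all add: repeat_and_layer_def repeat_and_hidden_def)
  have "f_mlp (repeat_and_layer K d C D E G L) Y $$ (i,j)
      = (\<Sum>q<length ?vs. max (row Y i \<bullet> ?vs ! q) 0 * ?ws ! q $ j) + Y $$ (i,j)"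
    unfolding mlp index_relu_mult_mat_of_cols_rows[OF Y vs ws i j, symmetric]
    using Y i j by (subst index_add_mat) auto
  then show ?thesis
    using assms by (simp add: numeral_3_eq_3 lessThan_Suc repeat_and_hidden_def repeat_and_output_def
        scalar_prod_add_distrib[of _ d] scalar_prod_minus_distrib[of _ d])
qed

lemma layer_apply_repeat_and_layer:
  fixes X :: "real mat"
  assumes X: "X \<in> carrier_mat K d"
    and idx: "C < d" "D < d" "E < d" "G < d" "L < d"
    and distinct: "C \<noteq> D" "C \<notin> {G, L}" "D \<notin> {G, L}" "E \<notin> {G, L}"
    and XG: "\<And>i. i < K \<Longrightarrow> X $$ (i,G) = (if i = 0 then 1 else 0)"
    and XL: "\<And>i. i < K \<Longrightarrow> X $$ (i,L) = (if i = 0 then 0 else 1)"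
    and XC: "X $$ (0,C) \<in> {0,1}" "\<And>i. 1 \<le> i \<Longrightarrow> i < K \<Longrightarrow> X $$ (i,C) = 0"
    and XDE: "\<And>i. i < K \<Longrightarrow> X $$ (i,D) \<in> {0,1} \<and> X $$ (i,E) \<in> {0,1}"
  shows "layer_apply (repeat_and_layer K d C D E G L) X At =
    mat K d (\<lambda>(i,j). if j = D \<and> 1 \<le> i
                      then band (X $$ (0,C)) (band (X $$ (i,D)) (bnot (X $$ (i,E))))
                      else X $$ (i,j))"
    (is "_ = ?target")
proof (intro eq_matI)
  fix i j assume "i < dim_row ?target" "j < dim_col ?target"
  then have i: "i < K" and j: "j < d" by auto
  define Y where "Y = mat K d (\<lambda>(i,j). if j = C then (\<Sum>k<K. X $$ (k,C)) else 0) + X"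
  have Y: "Y \<in> carrier_mat K d" using X by (simp add: Y_def)
  have "(\<Sum>k<K. X $$ (k,C)) = (\<Sum>k<K. if k = 0 then X $$ (0,C) else 0)"
    using XC(2) by (intro sum.cong) auto
  also have "\<dots> = X $$ (0,C)" using i by simp
  finally have Y_index: "Y $$ (i',j') = X $$ (i',j') + (if j' = C then X $$ (0,C) else 0)"
    if "i' < K" "j' < d" for i' j'
    using X that by (simp add: Y_def)
  have G: "Y $$ (i,G) = (if i = 0 then 1 else 0)" and L: "Y $$ (i,L) = (if i = 0 then 0 else 1)"
    using XG[OF i] XL[OF i] distinct idx i by (simp_all add: Y_index)
  have C: "Y $$ (i,C) = (if i = 0 then 2 * X $$ (0,C) else X $$ (0,C))"
    using XC(2)[of i] idx i by (auto simp: Y_index)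
  have D: "Y $$ (i,D) = X $$ (i,D)"
    using distinct idx i by (simp add: Y_index)
  have E: "(if E = C then 0 else Y $$ (i,E)) = (if E = C then 0 else X $$ (i,E))"
    using idx i by (simp add: Y_index)
  have and_neuron: "max (Y $$ (i,C) + Y $$ (i,D) - (if E = C then 0 else Y $$ (i,E))
                           - 3 * Y $$ (i,G) - Y $$ (i,L)) 0
      = (if i = 0 then 0 else band (X $$ (0,C)) (band (X $$ (i,D)) (bnot (X $$ (i,E)))))"
    unfolding C D E G L using XC XDE[OF i] XC(2)[of i] i
    by (cases "i = 0"; cases "E = C") (auto simp: band_def bnot_def)
  have D_neuron: "max (Y $$ (i,D) - Y $$ (i,G)) 0 = (if i = 0 then 0 else X $$ (i,D))"
    unfolding D G using XDE[OF i] by auto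
  have C_neuron: "max (Y $$ (i,C) - Y $$ (i,G)) 0 = X $$ (0,C)"
    unfolding C G using XC(1) by auto
  have "layer_apply (repeat_and_layer K d C D E G L) X At $$ (i,j)
      = f_mlp (repeat_and_layer K d C D E G L) Y $$ (i,j)"
    using X idx by (simp add: layer_apply_def f_attn_repeat_and_layer Y_def)
  also have "\<dots> = ?target $$ (i,j)"
    unfolding index_f_mlp_repeat_and_layer[OF Y idx i j] and_neuron D_neuron C_neuron
    using Y_index[OF i j] C i j distinct by auto
  finally show "layer_apply (repeat_and_layer K d C D E G L) X At $$ (i,j) = ?target $$ (i,j)" .
qed (use X in \<open>simp_all add: layer_apply_def f_mlp_def f_attn_repeat_and_layer idx\<close>)

definition zero_layer :: "nat \<Rightarrow> tlayer" where
  "zero_layer d = \<lparr>headsA = [], headsAT = [], headsI = [],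
     W1 = 0\<^sub>m d 1, W2 = 0\<^sub>m 1 1, W3 = 0\<^sub>m 1 1, W4 = 0\<^sub>m 1 d\<rparr>"

lemma wf_layer_zero_layer: "wf_layer d (zero_layer d)"
  by (auto simp: wf_layer_def zero_layer_def intro!: exI[of _ 1])

lemma layer_apply_zero_layer: "X \<in> carrier_mat K d \<Longrightarrow> layer_apply (zero_layer d) X At = X"
  by (simp add: layer_apply_def f_attn_def f_mlp_def zero_layer_def)

theorem lemmaC9:
  fixes K d C D E G L :: nat and \<Omega> :: real
  assumes "\<Omega> > 0"
    and "C < d" and "D < d" and "E < d" and "G < d" and "L < d"
    and "G \<noteq> L" and "C \<notin> {G, L}" and "D \<notin> {G, L}" and "E \<notin> {G, L}"
  shows "\<exists>T. wf_layer d T \<and>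
    (\<forall>X At. X \<in> carrier_mat K d \<longrightarrow> is_padded_incidence K At \<longrightarrow>
       (\<forall>i<K. \<forall>j<d. \<bar>X $$ (i,j)\<bar> \<le> \<Omega>) \<longrightarrow>
       (\<forall>i<K. X $$ (i,G) = (if i = 0 then 1 else 0)) \<longrightarrow>
       (\<forall>i<K. X $$ (i,L) = (if i = 0 then 0 else 1)) \<longrightarrow>
       X $$ (0,C) \<in> {0,1} \<longrightarrow> (\<forall>i. 1 \<le> i \<and> i < K \<longrightarrow> X $$ (i,C) = 0) \<longrightarrow>
       (\<forall>i<K. X $$ (i,D) \<in> {0,1} \<and> X $$ (i,E) \<in> {0,1}) \<longrightarrow>
       layer_apply T X At =
         mat K d (\<lambda>(i,j). if j = D \<and> 1 \<le> i
                           then band (X $$ (0,C)) (band (X $$ (i,D)) (bnot (X $$ (i,E))))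
                           else X $$ (i,j)))"
proof (cases "C = D")
  case True
  show ?thesis
  proof (intro exI[of _ "zero_layer d"] conjI wf_layer_zero_layer allI impI)
    fix X At :: "real mat"
    assume X: "X \<in> carrier_mat K d" and XC: "\<forall>i. 1 \<le> i \<and> i < K \<longrightarrow> X $$ (i,C) = 0"
    show "layer_apply (zero_layer d) X At =
         mat K d (\<lambda>(i,j). if j = D \<and> 1 \<le> i
                           then band (X $$ (0,C)) (band (X $$ (i,D)) (bnot (X $$ (i,E))))
                           else X $$ (i,j))"
      using X XC True by (intro eq_matI) (auto simp: layer_apply_zero_layer band_def)
  qed
next
  case False
  then show ?thesis
    using assms
    by (intro exI[of _ "repeat_and_layer K d C D E G L"] conjI wf_layer_repeat_and_layer
        allI impI layer_apply_repeat_and_layer) auto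
qed

end
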